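(* There exists a continuous function $f\colon[0,1]\to\mathbb{R}$ such that, with $x_n:=\sum_{k=1}^{n-1} f\big(\tfrac kn\big)$ and $y_n:=x_{n+1}-x_n$ for natural $n$, the limit $\lim_{n\to\infty} y_n$ does not exist. *)

theory Defs
  imports "HOL-Analysis.Analysis"
begin

end

theory Submission
  imports Defs "HOL-Computational_Algebra.Primes"
begin

text \<open>Take \<open>f x = (\<Sum>j. cos (2 \<pi> 2\<^sup>j x) / 2\<^sup>j)\<close>. Since \<open>\<Sum>k<n. cos (2 \<pi> m k / n)\<close> is \<open>n\<close> when
  \<open>n\<close> divides \<open>m\<close> and \<open>0\<close> otherwise, summing term by term gives
  \<open>x\<^sub>n = (\<Sum>j. [n dvd 2\<^sup>j] n / 2\<^sup>j) - 2\<close>, which is \<open>0\<close> when \<open>n\<close> is a power of two and \<open>-2\<close>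
  otherwise. As \<open>2\<^sup>i + 1\<close> and \<open>2\<^sup>i + 2\<close> are not powers of two for \<open>i \<ge> 2\<close>, the differences
  \<open>y\<^sub>n\<close> equal \<open>-2\<close> at \<open>n = 2\<^sup>i\<close> and \<open>0\<close> at \<open>n = 2\<^sup>i + 1\<close>, so they do not converge.\<close>

lemma sum_cos_roots_of_unity:
  fixes m n :: nat
  assumes "n \<ge> 1"
  shows "(\<Sum>k<n. cos (2 * pi * real m * real k / real n)) = (if n dvd m then real n else 0)"
proof -
  define z where "z = exp (2 * of_real pi * \<i> * of_nat m / of_nat n)"
  have "z ^ k = exp (complex_of_real (2 * pi * real m * real k / real n) * \<i>)" for k
    unfolding z_def by (simp add: exp_of_nat_mult [symmetric] algebra_simps)
  then have "(\<Sum>k<n. cos (2 * pi * real m * real k / real n)) = Re (\<Sum>k<n. z ^ k)"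
    by (simp add: Re_exp)
  also have "(\<Sum>k<n. z ^ k) = (if n dvd m then of_nat n else 0)"
  proof (cases "n dvd m")
    case True
    then have "z = 1"
      unfolding z_def using complex_root_unity_eq_1 [OF assms] by simp
    then show ?thesis using True by simp
  next
    case False
    then have "z \<noteq> 1"
      unfolding z_def using complex_root_unity_eq_1 [OF assms] by simp
    moreover have "z ^ n = 1"
      unfolding z_def using complex_root_unity assms by simp
    ultimately show ?thesis using False by (simp add: geometric_sum)
  qed
  finally show ?thesis by simp
qed

definition dyadic_cosine_series :: "real \<Rightarrow> real" where
  "dyadic_cosine_series x = (\<Sum>j. cos (2 * pi * 2 ^ j * x) / 2 ^ j)"

lemma norm_dyadic_cosine_term_le: "norm (cos (2 * pi * 2 ^ j * x) / 2 ^ j) \<le> (1 / 2 :: real) ^ j"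
  by (simp add: power_divide divide_right_mono)

lemma summable_dyadic_cosine_terms: "summable (\<lambda>j. cos (2 * pi * 2 ^ j * x) / (2 :: real) ^ j)"
  by (rule summable_comparison_test [OF _ summable_geometric [of "1 / 2"]])
     (use norm_dyadic_cosine_term_le in auto)

lemma continuous_on_dyadic_cosine_series: "continuous_on UNIV dyadic_cosine_series"
proof -
  have "uniform_limit UNIV (\<lambda>n x. \<Sum>j<n. cos (2 * pi * 2 ^ j * x) / (2 :: real) ^ j)
          dyadic_cosine_series sequentially"
    unfolding dyadic_cosine_series_def
    by (rule Weierstrass_m_test [where M = "\<lambda>j. (1 / 2) ^ j"])
       (use norm_dyadic_cosine_term_le summable_geometric [of "1 / 2 :: real"] in auto)
  then show ?thesis
    by (rule uniform_limit_theorem [rotated]) (auto intro!: continuous_intros always_eventually)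
qed

lemma dvd_power_two_iff: "n dvd 2 ^ j \<longleftrightarrow> (\<exists>i\<le>j. n = (2 :: nat) ^ i)"
  by (rule divides_primepow_nat) simp

lemma dyadic_cosine_riemann_sum:
  assumes "n \<ge> 1"
  shows "(\<Sum>k = 1..<n. dyadic_cosine_series (real k / real n)) =
           (if n \<in> range ((^) 2) then 0 else -2)"
proof -
  define c where "c j = (if n dvd 2 ^ j then real n else 0) / 2 ^ j" for j :: nat
  have inner_sum: "(\<Sum>k = 1..<n. cos (2 * pi * 2 ^ j * (real k / real n)) / 2 ^ j) =
                     c j - (1 / 2) ^ j" for j
  proof -
    have "{..<n} = insert 0 {1..<n}" using assms by auto
    then have "(\<Sum>k = 1..<n. cos (2 * pi * real (2 ^ j) * real k / real n)) =
                 (if n dvd 2 ^ j then real n else 0) - 1"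
      using sum_cos_roots_of_unity [OF assms, of "2 ^ j"] by simp
    then show ?thesis
      by (simp add: c_def power_divide diff_divide_distrib flip: sum_divide_distrib)
  qed
  have c_sums: "c sums (if n \<in> range ((^) 2) then 2 else 0)"
  proof (cases "n \<in> range ((^) 2)")
    case True
    then obtain i where n: "n = 2 ^ i" by blast
    have "c j = 0" if "j < i" for j
      using that by (auto simp: c_def n dvd_power_two_iff)
    moreover have "(\<lambda>j. c (j + i)) = (\<lambda>j. (1 / 2) ^ j)"
      by (auto simp: c_def n power_add power_divide le_imp_power_dvd)
    ultimately show ?thesis
      using True geometric_sums [of "1 / 2 :: real"] sums_zero_iff_shift [of i c] by simp
  next
    case False
    then have "c = (\<lambda>_. 0)"
      by (auto simp: fun_eq_iff c_def dvd_power_two_iff)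
    then show ?thesis using False by simp
  qed
  have "(\<Sum>k = 1..<n. dyadic_cosine_series (real k / real n)) =
          (\<Sum>j. \<Sum>k = 1..<n. cos (2 * pi * 2 ^ j * (real k / real n)) / 2 ^ j)"
    unfolding dyadic_cosine_series_def
    by (rule suminf_sum [symmetric]) (rule summable_dyadic_cosine_terms)
  also have "\<dots> = (\<Sum>j. c j - (1 / 2) ^ j)"
    by (simp only: inner_sum)
  also have "\<dots> = (if n \<in> range ((^) 2) then 2 else 0) - 2"
    using sums_diff [OF c_sums geometric_sums [of "1 / 2 :: real"]] by (simp add: sums_iff)
  finally show ?thesis by simp
qed

lemma power_two_plus_one_not_power_two:
  assumes "i \<ge> 1"
  shows "2 ^ i + 1 \<notin> range ((^) (2 :: nat))"
proof
  assume "2 ^ i + 1 \<in> range ((^) (2 :: nat))"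
  then obtain l where l: "2 ^ i + 1 = (2 :: nat) ^ l" by auto
  then have "l \<noteq> 0" by (cases l) auto
  with assms have "even ((2 :: nat) ^ i)" "even ((2 :: nat) ^ l)" by simp_all
  then show False using l by (metis even_plus_one_iff)
qed

lemma power_two_plus_two_not_power_two:
  assumes "i \<ge> 2"
  shows "2 ^ i + 2 \<notin> range ((^) (2 :: nat))"
proof
  assume "2 ^ i + 2 \<in> range ((^) (2 :: nat))"
  then obtain l where l: "2 ^ i + 2 = (2 :: nat) ^ l" by auto
  obtain i' where i': "i = Suc i'" "i' \<ge> 1" using assms by (cases i) auto
  with l obtain l' where "l = Suc l'" by (cases l) auto
  with l i' have "2 ^ i' + 1 = (2 :: nat) ^ l'" by simp
  then show False using power_two_plus_one_not_power_two [OF \<open>i' \<ge> 1\<close>] by auto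
qed

lemma not_convergent_two_subsequence_limits:
  fixes X :: "nat \<Rightarrow> 'a :: t2_space"
  assumes "strict_mono r" "strict_mono s"
    and "(X \<circ> r) \<longlonglongrightarrow> a" "(X \<circ> s) \<longlonglongrightarrow> b" "a \<noteq> b"
  shows "\<not> convergent X"
proof
  assume "convergent X"
  then obtain L where "X \<longlonglongrightarrow> L" by (auto simp: convergent_def)
  then have "(X \<circ> r) \<longlonglongrightarrow> L" "(X \<circ> s) \<longlonglongrightarrow> L"
    using assms(1,2) by (auto intro: LIMSEQ_subseq_LIMSEQ)
  then show False using assms(3-5) LIMSEQ_unique by metis
qed

theorem theorem1:
  shows "\<exists>f :: real \<Rightarrow> real. continuous_on {0..1} f \<and>
           (let x = (\<lambda>n::nat. \<Sum>k = 1..<n. f (real k / real n))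
            in \<not> convergent (\<lambda>n. x (Suc n) - x n))"
proof -
  define x where "x n = (\<Sum>k = 1..<n. dyadic_cosine_series (real k / real n))" for n :: nat
  define y where "y n = x (Suc n) - x n" for n
  have x_power_two: "x (2 ^ i) = 0" for i
    unfolding x_def using dyadic_cosine_riemann_sum [of "2 ^ i"] by simp
  have x_not_power_two: "x n = -2" if "n \<notin> range ((^) 2)" "n \<ge> 1" for n
    unfolding x_def using dyadic_cosine_riemann_sum [of n] that by simp
  have "y (2 ^ (i + 2)) = -2" "y (2 ^ (i + 2) + 1) = 0" for i
    using power_two_plus_one_not_power_two [of "i + 2"] power_two_plus_two_not_power_two [of "i + 2"]
      x_power_two [of "i + 2"]
    by (simp_all add: y_def x_not_power_two)
  then have "(y \<circ> (\<lambda>i. 2 ^ (i + 2))) \<longlonglongrightarrow> -2" "(y \<circ> (\<lambda>i. 2 ^ (i + 2) + 1)) \<longlonglongrightarrow> 0"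
    by (simp_all add: comp_def)
  then have "\<not> convergent y"
    by (rule not_convergent_two_subsequence_limits [rotated 2]) (auto intro: strict_monoI)
  moreover have "continuous_on {0..1} dyadic_cosine_series"
    using continuous_on_dyadic_cosine_series by (rule continuous_on_subset) simp
  ultimately show ?thesis
    unfolding Let_def y_def [abs_def] x_def [abs_def] by blast
qed

end
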